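(* Let $q$ be a prime power, $\ell,L$ integers with $1\le\ell\le q$ and $\ell\le L<\ell q$, and $r\in[0,1-\frac{\ell}{L+1})$ with $rn\in\mathbb{N}$. If $C\subseteq\mathbb{F}_q^n$ is a linear $(r,\ell,L)$ list-recoverable code of dimension at least $2$, then its minimum distance satisfies $d(C)>rn+\lfloor\frac{\ell}{L+1-\ell}rn\rfloor$.
   Context: A linear code is a subspace of $\mathbb{F}_q^n$; $d(C)$ is the minimum Hamming distance between distinct codewords. A code $C\subseteq\mathbb{F}_q^n$ is $(r,\ell,L)$ list-recoverable if for every sequence $S_1,\dots,S_n$ of subsets of $\mathbb{F}_q$ of size at most $\ell$, the number of $c\in C$ with $c_i\notin S_i$ for at most $rn$ coordinates $i$ is at most $L$. *)

theory Defs
  imports "HOL-Analysis.Analysis"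
begin

text \<open>Codes of length n over a finite field 'a (q = CARD('a)) are subsets of 'a ^ 'n, n = CARD('n).
Linear codes are subspaces w.r.t. the scalar multiplication (*s); dimension is vec.dim.\<close>

definition hamming_dist :: "'a ^ 'n \<Rightarrow> 'a ^ 'n \<Rightarrow> nat" where
  "hamming_dist x y = card {i. x $ i \<noteq> y $ i}"

definition min_dist :: "('a ^ 'n) set \<Rightarrow> nat" where
  "min_dist C = Min {hamming_dist x y | x y. x \<in> C \<and> y \<in> C \<and> x \<noteq> y}"

definition list_recoverable :: "('a ^ 'n::finite) set \<Rightarrow> real \<Rightarrow> nat \<Rightarrow> nat \<Rightarrow> bool" where
  "list_recoverable C r l L \<longleftrightarrow>
     (\<forall>S :: 'n \<Rightarrow> 'a set. (\<forall>i. card (S i) \<le> l) \<longrightarrow>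
        card {c \<in> C. real (card {i. c $ i \<notin> S i}) \<le> r * real CARD('n)} \<le> L)"

end

theory Submission
  imports Defs
begin

text \<open>Take a nonzero codeword c of minimum weight d and a codeword c' independent of it. The L + 1
codewords a c + b c' with b ranging over a fixed l-element set of scalars take at most l values
on every coordinate outside the support of c. On the d coordinates of the support, hand out the
L + 1 codewords cyclically, l per coordinate; then every codeword lies in the list of at least
\<lfloor>d l / (L + 1)\<rfloor> coordinates and so has at most d - \<lfloor>d l / (L + 1)\<rfloor> errors. If d were at most
rn + \<lfloor>l rn / (L + 1 - l)\<rfloor>, this number would be at most rn, and L + 1 codewords would lie
within radius rn of the lists, contradicting list recoverability.\<close>

lemma card_cyclic_windows_hitting_ge:
  fixes d l m k :: nat
  assumes "0 < l" "l \<le> m" "k < m"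
  shows "d * l div m \<le> card {p. p < d \<and> (\<exists>u<l. (p * l + u) mod m = k)}"
proof -
  let ?P = "{p. p < d \<and> (\<exists>u<l. (p * l + u) mod m = k)}"
  \<comment> \<open>the windows of the positions p < d tile 0, ..., d l - 1, and the j-th number k + j m
      congruent to k lies in the window of position (k + j m) div l\<close>
  let ?f = "\<lambda>j. (k + j * m) div l"
  have "strict_mono ?f"
  proof (unfold strict_mono_Suc_iff, intro allI)
    fix j
    have "(k + j * m) div l < (k + j * m + l) div l"
      using assms(1) by simp
    also have "\<dots> \<le> (k + Suc j * m) div l"
      using assms(2) by (intro div_le_mono) simp
    finally show "?f j < ?f (Suc j)" .
  qed
  then have inj: "inj_on ?f {..<d * l div m}"
    by (rule strict_mono_imp_inj_on)
  have "?f ` {..<d * l div m} \<subseteq> ?P"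
  proof
    fix p assume "p \<in> ?f ` {..<d * l div m}"
    then obtain j where j: "j < d * l div m" and p: "p = (k + j * m) div l" by auto
    have "Suc j * m \<le> d * l div m * m" using j by (intro mult_right_mono) auto
    also have "\<dots> \<le> d * l" by (simp add: div_times_less_eq_dividend)
    finally have "k + j * m < d * l" using assms(3) by simp
    then have "p < d" using p assms(1) by (simp add: div_less_iff_less_mult)
    moreover have "(p * l + (k + j * m) mod l) mod m = k"
      using p assms(3) by (simp add: div_mult_mod_eq)
    moreover have "(k + j * m) mod l < l" using assms(1) by simp
    ultimately show "p \<in> ?P" by blast
  qed
  then have "card (?f ` {..<d * l div m}) \<le> card ?P"
    by (intro card_mono) auto
  then show ?thesis
    using card_image[OF inj] by simp
qed

lemma diff_div_le_of_le_add_div: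
  fixes d t l m :: nat
  assumes "l < m" and "d \<le> t + l * t div (m - l)"
  shows "d - d * l div m \<le> t"
proof (cases "d \<le> t")
  case False
  then obtain e where d: "d = t + e"
    using le_Suc_ex[of t d] by auto
  have "e \<le> l * t div (m - l)"
    using assms(2) d by simp
  then have "e * (m - l) \<le> l * t"
    using assms(1) by (simp add: less_eq_div_iff_mult_less_eq)
  moreover have "e * m = e * (m - l) + e * l"
    using assms(1) by (metis distrib_left le_add_diff_inverse2 less_imp_le)
  ultimately have "e * m \<le> l * d"
    unfolding d by (simp add: distrib_left mult.commute)
  then have "e \<le> d * l div m"
    using assms(1) by (simp add: less_eq_div_iff_mult_less_eq mult.commute)
  then show ?thesis
    using d by simp
qed simp

context vector_space
begin

lemma not_subset_span_of_card_lt_dim: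
  assumes "card B < dim V" and "finite B"
  obtains v where "v \<in> V" and "v \<notin> span B"
  using dim_le_card[of V B] assms by (meson leD subsetI)

lemma scale_add_scale_eqD:
  assumes "x \<noteq> 0" and "y \<notin> span {x}"
    and "scale a x + scale b y = scale a' x + scale b' y"
  shows "a = a' \<and> b = b'"
proof -
  have e: "scale (a - a') x = scale (b' - b) y"
    using assms(3) by (simp add: algebra_simps scale_left_diff_distrib)
  have "b = b'"
  proof (rule ccontr)
    assume "b \<noteq> b'"
    then have "y = scale (inverse (b' - b)) (scale (b' - b) y)"
      by simp
    also have "\<dots> = scale (inverse (b' - b) * (a - a')) x"
      by (simp flip: e)
    finally have "y \<in> span {x}"
      by (metis span_base span_scale singletonI)
    with assms(2) show False ..
  qed
  with e assms(1) show ?thesis by simp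
qed

end

lemma min_dist_attained:
  fixes C :: "('a::field ^ 'n::finite) set"
  assumes "vec.subspace C" and "x0 \<in> C" and "x0 \<noteq> 0"
  obtains c where "c \<in> C" "c \<noteq> 0" "card {i. c $ i \<noteq> 0} = min_dist C"
proof -
  let ?D = "{hamming_dist x y | x y. x \<in> C \<and> y \<in> C \<and> x \<noteq> y}"
  have "0 \<in> C" using assms(1) by (rule vec.subspace_0)
  then have "hamming_dist x0 0 \<in> ?D" using assms(2,3) by auto
  then have "?D \<noteq> {}" by auto
  moreover have "finite ?D"
    by (rule finite_subset[of _ "{..CARD('n)}"]) (auto simp: hamming_dist_def card_mono)
  ultimately have "min_dist C \<in> ?D"
    unfolding min_dist_def by (rule Min_in[rotated])
  then obtain x y where xy: "x \<in> C" "y \<in> C" "x \<noteq> y" "hamming_dist x y = min_dist C"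
    by auto
  show thesis
  proof
    show "x - y \<in> C" using assms(1) xy by (intro vec.subspace_diff)
    show "x - y \<noteq> 0" using xy by simp
    show "card {i. (x - y) $ i \<noteq> 0} = min_dist C"
      using xy(4) by (simp add: hamming_dist_def)
  qed
qed

lemma codewords_few_values_off_support:
  fixes C :: "('a::{field,finite} ^ 'n::finite) set"
  assumes "vec.subspace C" and "c \<in> C" and "c' \<in> C"
    and "c \<noteq> 0" and "c' \<notin> vec.span {c}"
    and "l \<le> CARD('a)" and "m \<le> l * CARD('a)"
  obtains X where "inj_on X {..<m}" and "X ` {..<m} \<subseteq> C"
    and "\<And>i. c $ i = 0 \<Longrightarrow> card ((\<lambda>k. X k $ i) ` {..<m}) \<le> l"
proof -
  obtain B :: "'a set" where B: "card B = l"
    using obtain_subset_with_card_n[OF assms(6)] by blast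
  have "m \<le> card ((UNIV :: 'a set) \<times> B)"
    using assms(7) B by (simp add: card_cartesian_product mult.commute)
  then obtain P where P: "P \<subseteq> (UNIV :: 'a set) \<times> B" "card P = m"
    using obtain_subset_with_card_n by blast
  then obtain e where e: "bij_betw e {..<m} P"
    using ex_bij_betw_nat_finite[of P] by (auto simp: atLeast0LessThan)
  define X where "X k = fst (e k) *s c + snd (e k) *s c'" for k
  show thesis
  proof
    show "inj_on X {..<m}"
    proof (rule inj_onI)
      fix j k assume "j \<in> {..<m}" "k \<in> {..<m}" "X j = X k"
      then have "e j = e k"
        using vec.scale_add_scale_eqD[OF assms(4,5)] unfolding X_def by (simp add: prod_eq_iff)
      with e \<open>j \<in> _\<close> \<open>k \<in> _\<close> show "j = k"
        by (auto simp: bij_betw_def inj_on_def)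
    qed
    show "X ` {..<m} \<subseteq> C"
      unfolding X_def using assms(1-3)
      by (auto intro: vec.subspace_add vec.subspace_scale)
    fix i assume "c $ i = 0"
    have "snd (e k) \<in> B" if "k < m" for k
      using bij_betw_apply[OF e] that P(1) by (force simp: mem_Times_iff)
    with \<open>c $ i = 0\<close> have "(\<lambda>k. X k $ i) ` {..<m} \<subseteq> (\<lambda>b. b * c' $ i) ` B"
      by (auto simp: X_def)
    then have "card ((\<lambda>k. X k $ i) ` {..<m}) \<le> card ((\<lambda>b. b * c' $ i) ` B)"
      by (intro card_mono) auto
    also have "\<dots> \<le> l"
      using B card_image_le[of B] by auto
    finally show "card ((\<lambda>k. X k $ i) ` {..<m}) \<le> l" .
  qed
qed

lemma lists_with_few_errors:
  fixes X :: "nat \<Rightarrow> 'a ^ 'n::finite" and A :: "'n set"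
  assumes "0 < l" and "l \<le> m"
    and off_support: "\<And>i. i \<notin> A \<Longrightarrow> card ((\<lambda>k. X k $ i) ` {..<m}) \<le> l"
  obtains S where "\<And>i. card (S i) \<le> l"
    and "\<And>k. k < m \<Longrightarrow> card {i. X k $ i \<notin> S i} \<le> card A - card A * l div m"
proof -
  define d where "d = card A"
  obtain g where g: "bij_betw g {..<d} A"
    using ex_bij_betw_nat_finite[of A] by (auto simp: d_def atLeast0LessThan)
  define pos where "pos = inv_into {..<d} g"
  define S where "S i = (if i \<in> A then (\<lambda>u. X ((pos i * l + u) mod m) $ i) ` {..<l}
                         else (\<lambda>k. X k $ i) ` {..<m})" for i
  show thesis
  proof
    show "card (S i) \<le> l" for i
      using off_support[of i] by (auto simp: S_def intro: card_image_le[THEN order_trans])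
    fix k assume k: "k < m"
    define P where "P = {p. p < d \<and> (\<exists>u<l. (p * l + u) mod m = k)}"
    have "{i. X k $ i \<notin> S i} \<subseteq> g ` ({..<d} - P)"
    proof
      fix i assume i: "i \<in> {i. X k $ i \<notin> S i}"
      then have "i \<in> A" using k by (auto simp: S_def split: if_splits)
      then obtain p where p: "p < d" "i = g p"
        using g by (auto simp: bij_betw_def)
      then have "pos i = p"
        using g by (simp add: pos_def bij_betw_def inv_into_f_f)
      then have "p \<notin> P"
        using i \<open>i \<in> A\<close> by (force simp: P_def S_def)
      then show "i \<in> g ` ({..<d} - P)" using p by auto
    qed
    then have "card {i. X k $ i \<notin> S i} \<le> card (g ` ({..<d} - P))"
      by (intro card_mono) auto
    also have "\<dots> \<le> card ({..<d} - P)"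
      by (rule card_image_le) auto
    also have "\<dots> = d - card P"
      by (subst card_Diff_subset) (auto simp: P_def)
    also have "\<dots> \<le> d - d * l div m"
      using card_cyclic_windows_hitting_ge[OF assms(1,2) k, of d] unfolding P_def by simp
    finally show "card {i. X k $ i \<notin> S i} \<le> card A - card A * l div m"
      unfolding d_def .
  qed
qed

theorem theorem6p3:
  fixes C :: "('a::{field,finite} ^ 'n::finite) set"
    and r :: real and l L :: nat
  assumes "1 \<le> l" and "l \<le> CARD('a)"
    and "l \<le> L" and "L < l * CARD('a)"
    and "0 \<le> r" and "r < 1 - real l / real (L + 1)"
    and "r * real CARD('n) \<in> \<nat>"
    and "vec.subspace C"
    and "vec.dim C \<ge> 2"
    and "list_recoverable C r l L"
  shows "real (min_dist C) > r * real CARD('n)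
           + real_of_int \<lfloor>real l / real (L + 1 - l) * (r * real CARD('n))\<rfloor>"
proof (rule ccontr)
  obtain t :: nat where t: "r * real CARD('n) = real t"
    using assms(7) by (metis Nats_cases)
  have "\<lfloor>real l / real (L + 1 - l) * real t\<rfloor> = int (l * t div (L + 1 - l))"
    using floor_divide_of_nat_eq[of "l * t" "L + 1 - l"] by simp
  moreover assume "\<not> ?thesis"
  ultimately have d: "min_dist C - min_dist C * l div (L + 1) \<le> t"
    using assms(3) by (intro diff_div_le_of_le_add_div) (simp_all add: t)
  obtain x0 where "x0 \<in> C" "x0 \<notin> vec.span {0}"
    using vec.not_subset_span_of_card_lt_dim[of "{0}" C] assms(9) by auto
  then obtain c where c: "c \<in> C" "c \<noteq> 0" "card {i. c $ i \<noteq> 0} = min_dist C"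
    using min_dist_attained[OF assms(8)] by (metis vec.span_zero)
  obtain c' where c': "c' \<in> C" "c' \<notin> vec.span {c}"
    using vec.not_subset_span_of_card_lt_dim[of "{c}" C] assms(9) by auto
  obtain X where X: "inj_on X {..<L + 1}" "X ` {..<L + 1} \<subseteq> C"
    and off_support: "\<And>i. c $ i = 0 \<Longrightarrow> card ((\<lambda>k. X k $ i) ` {..<L + 1}) \<le> l"
    using codewords_few_values_off_support[OF assms(8) c(1) c'(1) c(2) c'(2) assms(2), of "L + 1"]
      assms(4) by auto
  obtain S where S: "\<And>i. card (S i) \<le> l"
    and errors: "\<And>k. k < L + 1 \<Longrightarrow> card {i. X k $ i \<notin> S i} \<le> min_dist C - min_dist C * l div (L + 1)"
    using lists_with_few_errors[of l "L + 1" "{i. c $ i \<noteq> 0}" X] off_support assms(1,3) c(3) by auto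
  have "X ` {..<L + 1} \<subseteq> {x \<in> C. real (card {i. x $ i \<notin> S i}) \<le> r * real CARD('n)}"
    using X(2) errors d t by (auto intro: order_trans)
  then have "card (X ` {..<L + 1}) \<le> L"
    using assms(10) S unfolding list_recoverable_def by (meson card_mono finite le_trans)
  then show False
    using card_image[OF X(1)] by simp
qed

end
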